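(* Let $P$ be a finite semipure poset of length $n$ with a unique minimum element $\hat 0$, $t\ge1$, $\lambda_P:\mathrm{Cov}(\hat P)\to L_P$ an EL-labeling, $\lambda$ the induced EL-labeling of $\widehat{P*T_{t,n}}$ restricted to $(P*T_{t,n})^+=[(\hat 0,\hat 0_T),\hat 1]$, and $m\in\mathbb N$. Then the number of ascent free maximal chains of $(P*T_{t,n})^+$ of length $m+1$ equals $$\sum_{\substack{w\in\mathrm{NDA}_{m+1}(L_P)\\ w_m\not\le w_{m+1}}} c(w)\,t^{\mathrm{asc}(w)}(1+t)^{m-2\,\mathrm{asc}(w)}+\sum_{\substack{w\in\mathrm{NDA}_{m+1}(L_P)\\ w_m\le w_{m+1}}} c(w)\,t^{\mathrm{asc}(w)}(1+t)^{m+1-2\,\mathrm{asc}(w)},$$ where $c(w)$ is the number of maximal chains of $P^+$ (the interval $[\hat 0,\hat 1_P]$ of $\hat P$) of length $m+1$ whose label sequence under $\lambda_P$ is $w$.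
   Context: Rees product $P*Q$ of semipure posets (rank $r_P(x)$ = common length of maximal chains of $P_{\le x}$): the set $\{(p,q): r_P(p)\ge r_Q(q)\}$ with $(p_1,q_1)\le(p_2,q_2)$ iff $p_1\le p_2$, $q_1\le q_2$, $r_P(p_2)-r_P(p_1)\ge r_Q(q_2)-r_Q(q_1)$. $T_{t,n}$: sequences over $\{1,\dots,t\}$ of length $\le n$ ordered by prefix, minimum $\hat 0_T$, rank = length. $\hat Q$: $Q$ with a new minimum and new maximum adjoined (even if $Q$ already has them); for $\hat P$ these are $\hat 0_P,\hat 1_P$. $Q^+$: $Q$ with a new maximum adjoined. An edge labeling $\lambda:\mathrm{Cov}(Q)\to L$ of a bounded poset is an EL-labeling if each interval $[x,y]$ has a unique maximal chain with weakly increasing labels and its label sequence lexicographically precedes those of all other maximal chains of $[x,y]$. The induced labeling $\lambda$ of $\widehat{P*T_{t,n}}$ takes values in $L_P\times\{0<1\}$ (product order): the minimum is identified with $(\hat 0_P,\hat 0_T)$; for a cover $(x,k)\lessdot(y,l)$ with $(y,l)\ne\hat 1$, $\lambda=(\lambda_P(x,y),1)$ if $k<l$ and $(\lambda_P(x,y),0)$ if $k=l$; for $(x,k)\lessdot\hat 1$, $\lambda=(\lambda_P(x,\hat 1_P),0)$. A maximal chain is ascent free if no two consecutive labels $a,b$ satisfy $a\le b$. For a word $w$ of length $N$ over a poset $A$: $i\in[N-1]$ is an ascent if $w_i\le w_{i+1}$; $\mathrm{asc}(w)$ counts ascents; a double ascent is $i\in[N-2]$ with $w_i\le w_{i+1}\le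 w_{i+2}$; $\mathrm{NDA}_N(A)$ is the set of length-$N$ words over $A$ without double ascents. *)

theory Defs
  imports Main "HOL-Library.Sublist" "HOL-Library.Groups_Big_Fun"
begin

datatype 'a ext = Bot | Elem 'a | Top

fun le_ext :: "('a \<Rightarrow> 'a \<Rightarrow> bool) \<Rightarrow> 'a ext \<Rightarrow> 'a ext \<Rightarrow> bool" where
  "le_ext le Bot _ = True"
| "le_ext le _ Top = True"
| "le_ext le (Elem a) (Elem b) = le a b"
| "le_ext le _ _ = False"

definition hat_carrier :: "'a set \<Rightarrow> 'a ext set" where
  "hat_carrier S = insert Bot (insert Top (Elem ` S))"

definition is_chain :: "'a set \<Rightarrow> ('a \<Rightarrow> 'a \<Rightarrow> bool) \<Rightarrow> 'a set \<Rightarrow> bool" where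
  "is_chain S le C \<longleftrightarrow> C \<subseteq> S \<and> (\<forall>x\<in>C. \<forall>y\<in>C. le x y \<or> le y x)"

definition is_maxchain :: "'a set \<Rightarrow> ('a \<Rightarrow> 'a \<Rightarrow> bool) \<Rightarrow> 'a set \<Rightarrow> bool" where
  "is_maxchain S le C \<longleftrightarrow> is_chain S le C \<and> (\<forall>D. is_chain S le D \<and> C \<subseteq> D \<longrightarrow> D = C)"

definition below :: "'a::order set \<Rightarrow> 'a \<Rightarrow> 'a set" where
  "below P x = {y\<in>P. y \<le> x}"

definition semipure :: "'a::order set \<Rightarrow> bool" where
  "semipure P \<longleftrightarrow> (\<forall>x\<in>P. \<forall>C D. is_maxchain (below P x) (\<le>) C \<and> is_maxchain (below P x) (\<le>) D
       \<longrightarrow> card C = card D)"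

definition rank :: "'a::order set \<Rightarrow> 'a \<Rightarrow> nat" where
  "rank P x = card (SOME C. is_maxchain (below P x) (\<le>) C) - 1"

definition poset_length :: "'a::order set \<Rightarrow> nat" where
  "poset_length P = Max {card C - 1 | C. is_chain P (\<le>) C}"

definition covers :: "'b set \<Rightarrow> ('b \<Rightarrow> 'b \<Rightarrow> bool) \<Rightarrow> 'b \<Rightarrow> 'b \<Rightarrow> bool" where
  "covers S le x y \<longleftrightarrow> x \<in> S \<and> y \<in> S \<and> x \<noteq> y \<and> le x y \<and>
      (\<forall>z\<in>S. le x z \<and> le z y \<longrightarrow> z = x \<or> z = y)"

(* maximal chains x = c_0 \<lessdot> c_1 \<lessdot> ... \<lessdot> c_k = y of the interval [x,y]; length = k *)
definition max_chains_interval :: "'b set \<Rightarrow> ('b \<Rightarrow> 'b \<Rightarrow> bool) \<Rightarrow> 'b \<Rightarrow> 'b \<Rightarrow> 'b list set" where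
  "max_chains_interval S le x y =
     {c. c \<noteq> [] \<and> hd c = x \<and> last c = y \<and>
         (\<forall>i. Suc i < length c \<longrightarrow> covers S le (c ! i) (c ! Suc i))}"

definition labels :: "('b \<Rightarrow> 'b \<Rightarrow> 'l) \<Rightarrow> 'b list \<Rightarrow> 'l list" where
  "labels lam c = map (\<lambda>i. lam (c ! i) (c ! Suc i)) [0..<length c - 1]"

definition weakly_incr :: "'l::order list \<Rightarrow> bool" where
  "weakly_incr w \<longleftrightarrow> (\<forall>i. Suc i < length w \<longrightarrow> w ! i \<le> w ! Suc i)"

definition lex_prec :: "'l::order list \<Rightarrow> 'l list \<Rightarrow> bool" where
  "lex_prec v w \<longleftrightarrow> strict_prefix v w \<or>
     (\<exists>i. i < length v \<and> i < length w \<and> take i v = take i w \<and> v ! i < w ! i)"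

definition EL_labeling :: "'b set \<Rightarrow> ('b \<Rightarrow> 'b \<Rightarrow> bool) \<Rightarrow> ('b \<Rightarrow> 'b \<Rightarrow> 'l::order) \<Rightarrow> bool" where
  "EL_labeling S le lam \<longleftrightarrow>
     (\<forall>x\<in>S. \<forall>y\<in>S. le x y \<longrightarrow>
        (\<exists>!c. c \<in> max_chains_interval S le x y \<and> weakly_incr (labels lam c)) \<and>
        (\<forall>c\<in>max_chains_interval S le x y. weakly_incr (labels lam c) \<longrightarrow>
           (\<forall>c'\<in>max_chains_interval S le x y. c' \<noteq> c \<longrightarrow> lex_prec (labels lam c) (labels lam c'))))"

definition Tseq :: "nat \<Rightarrow> nat \<Rightarrow> nat list set" where
  "Tseq t n = {s. set s \<subseteq> {1..t} \<and> length s \<le> n}"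

definition rees_carrier :: "'a::order set \<Rightarrow> nat \<Rightarrow> nat \<Rightarrow> ('a \<times> nat list) set" where
  "rees_carrier P t n = {(p, s). p \<in> P \<and> s \<in> Tseq t n \<and> rank P p \<ge> length s}"

definition rees_le :: "'a::order set \<Rightarrow> ('a \<times> nat list) \<Rightarrow> ('a \<times> nat list) \<Rightarrow> bool" where
  "rees_le P a b \<longleftrightarrow> fst a \<le> fst b \<and> prefix (snd a) (snd b) \<and>
     int (rank P (fst b)) - int (rank P (fst a)) \<ge> int (length (snd b)) - int (length (snd a))"

(* induced labeling of \<hat>(P * T_{t,n}) with values in L_P \<times> {0<1} (False = 0, True = 1);
   the new minimum Bot is identified with (\<hat>0_P, \<hat>0_T) = (Bot, []) *)
fun induced_lab :: "('a ext \<Rightarrow> 'a ext \<Rightarrow> 'l) \<Rightarrow> ('a \<times> nat list) ext \<Rightarrow> ('a \<times> nat list) ext \<Rightarrow> 'l \<times> bool" where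
  "induced_lab lamP (Elem (x, k)) (Elem (y, l)) = (lamP (Elem x) (Elem y), strict_prefix k l)"
| "induced_lab lamP Bot (Elem (y, l)) = (lamP Bot (Elem y), strict_prefix [] l)"
| "induced_lab lamP (Elem (x, k)) Top = (lamP (Elem x) Top, False)"
| "induced_lab lamP Bot Top = (lamP Bot Top, False)"
| "induced_lab lamP _ _ = undefined"

definition le_lab :: "'l::order \<times> bool \<Rightarrow> 'l \<times> bool \<Rightarrow> bool" where
  "le_lab a b \<longleftrightarrow> fst a \<le> fst b \<and> snd a \<le> snd b"

definition ascent_free :: "('l \<Rightarrow> 'l \<Rightarrow> bool) \<Rightarrow> 'l list \<Rightarrow> bool" where
  "ascent_free le w \<longleftrightarrow> \<not> (\<exists>i. Suc i < length w \<and> le (w ! i) (w ! Suc i))"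

definition asc :: "'l::order list \<Rightarrow> nat" where
  "asc w = card {i. Suc i < length w \<and> w ! i \<le> w ! Suc i}"

definition NDA :: "nat \<Rightarrow> 'l::order list set" where
  "NDA N = {w. length w = N \<and>
     \<not> (\<exists>i. i + 2 < length w \<and> w ! i \<le> w ! (i + 1) \<and> w ! (i + 1) \<le> w ! (i + 2))}"

definition chain_count :: "'a::order set \<Rightarrow> 'a \<Rightarrow> ('a ext \<Rightarrow> 'a ext \<Rightarrow> 'l) \<Rightarrow> nat \<Rightarrow> 'l list \<Rightarrow> nat" where
  "chain_count P z lamP N w =
     card {c \<in> max_chains_interval (hat_carrier P) (le_ext (\<le>)) (Elem z) Top.
             length c = N + 1 \<and> labels lamP c = w}"

end

theory Submission
  imports Defs "HOL-Library.FuncSet"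
begin

(* The count is obtained from an explicit bijection.  A maximal chain of (P * T_{t,n})^+ of
   length m+1 starting at (z, []) is a chain z = x_0 < ... < x_m < 1 of P^+ in which each of
   the first m steps is decorated by a choice d_j in {0..t}: the T-coordinate either stays
   (d_j = 0) or grows by the letter d_j.  Its j-th induced label is (w_j, d_j \<noteq> 0), where w is
   the label word of the underlying chain of P^+, and the last label is (w_m, 0).  Hence the
   lifted chain is ascent free iff every ascent w_j \<le> w_{j+1} carries a proper step d_j \<noteq> 0
   followed by a non-step d_{j+1} = 0, i.e. iff every d_j lies in an explicit set
   admissible t w j.  Counting the choices position by position gives the closed forms
   t^asc(w) (1+t)^(m - 2 asc(w)) resp. t^asc(w) (1+t)^(m + 1 - 2 asc(w)) on words without
   double ascents (depending on whether w_m \<le> w_{m+1} in the paper's 1-based indexing),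
   and 0 otherwise; summing over the chains of P^+ grouped by label word gives the theorem.

   The counting identity is purely
   combinatorial: it does not use that z is the minimum, that t \<ge> 1, or that the labelling
   is an EL-labelling. *)

lemma covers_hat_Elem_Elem:
  "covers (hat_carrier S) (le_ext le) (Elem a) (Elem b) \<longleftrightarrow> covers S le a b"
  unfolding covers_def hat_carrier_def by auto

definition maximal_in :: "'b set \<Rightarrow> ('b \<Rightarrow> 'b \<Rightarrow> bool) \<Rightarrow> 'b \<Rightarrow> bool" where
  "maximal_in S le a \<longleftrightarrow> a \<in> S \<and> (\<forall>b\<in>S. le a b \<longrightarrow> b = a)"

lemma covers_hat_Elem_Top:
  "covers (hat_carrier S) (le_ext le) (Elem a) Top \<longleftrightarrow> maximal_in S le a"
  unfolding covers_def hat_carrier_def maximal_in_def by auto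

lemma not_covers_hat_Bot: "\<not> covers (hat_carrier S) (le_ext le) x Bot"
  unfolding covers_def by (cases x) auto

lemma not_covers_hat_from_Top: "\<not> covers (hat_carrier S) (le_ext le) Top y"
  unfolding covers_def by (cases y) auto

definition cover_path :: "'b set \<Rightarrow> ('b \<Rightarrow> 'b \<Rightarrow> bool) \<Rightarrow> 'b list \<Rightarrow> bool" where
  "cover_path S le xs \<longleftrightarrow> (\<forall>i. Suc i < length xs \<longrightarrow> covers S le (xs ! i) (xs ! Suc i))"

lemma cover_path_subset:
  assumes "cover_path S le xs" "xs \<noteq> []" "maximal_in S le (last xs)"
  shows "set xs \<subseteq> S"
proof
  fix x assume "x \<in> set xs"
  then obtain i where i: "i < length xs" "x = xs ! i" by (auto simp: in_set_conv_nth)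
  show "x \<in> S"
  proof (cases "Suc i < length xs")
    case True
    then show ?thesis using assms(1) i by (auto simp: cover_path_def covers_def)
  next
    case False
    then have "i = length xs - 1" using i(1) by linarith
    then have "x = last xs" using i(2) assms(2) by (simp add: last_conv_nth)
    then show ?thesis using assms(3) by (simp add: maximal_in_def)
  qed
qed

lemma path_max_chain_hat:
  assumes len: "length xs = N + 1" and x0: "xs ! 0 = a"
    and path: "cover_path S le xs" and max: "maximal_in S le (last xs)"
  shows "map Elem xs @ [Top] \<in> max_chains_interval (hat_carrier S) (le_ext le) (Elem a) Top"
proof -
  let ?c = "map Elem xs @ [Top]"
  have "covers (hat_carrier S) (le_ext le) (?c ! i) (?c ! Suc i)" if "Suc i < length ?c" for i
  proof (cases "Suc i < length xs")
    case True
    then show ?thesis using path by (simp add: nth_append cover_path_def covers_hat_Elem_Elem)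
  next
    case False
    then have "i = N" using that len by simp
    moreover have "last xs = xs ! N" using len last_conv_nth[of xs] by force
    ultimately show ?thesis using max len by (simp add: nth_append covers_hat_Elem_Top)
  qed
  moreover have "hd ?c = Elem a" using len x0 by (cases xs) auto
  ultimately show ?thesis by (auto simp: max_chains_interval_def)
qed

text \<open>In a maximal chain of \<open>[a, Top]\<close> in \<open>\<hat>S\<close> every entry but the last is an element of
  \<open>S\<close>: it is neither the new minimum (which covers nothing from below) nor the new maximum
  (which covers nothing above).\<close>
lemma max_chain_hat_inner:
  assumes c: "c \<in> max_chains_interval (hat_carrier S) (le_ext le) (Elem a) Top"
    and len: "length c = N + 2" and i: "i \<le> N"
  shows "\<exists>x. c ! i = Elem x"
proof -
  have hd: "c ! 0 = Elem a"
    and cov: "\<And>j. j \<le> N \<Longrightarrow> covers (hat_carrier S) (le_ext le) (c ! j) (c ! Suc j)"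
    using c len by (auto simp: max_chains_interval_def hd_conv_nth)
  have "c ! i \<noteq> Top" using cov[OF i] not_covers_hat_from_Top by metis
  moreover have "c ! i \<noteq> Bot"
  proof (cases i)
    case (Suc j)
    then show ?thesis using cov[of j] not_covers_hat_Bot i by (metis Suc_leD)
  qed (use hd in simp)
  ultimately show ?thesis by (cases "c ! i") auto
qed

lemma max_chains_hat_iff:
  "c \<in> max_chains_interval (hat_carrier S) (le_ext le) (Elem a) Top \<and> length c = N + 2 \<longleftrightarrow>
   (\<exists>xs. c = map Elem xs @ [Top] \<and> length xs = N + 1 \<and> xs ! 0 = a \<and>
         cover_path S le xs \<and> maximal_in S le (last xs))"
  (is "?chain \<longleftrightarrow> ?path")
proof
  assume ?path
  then show ?chain using path_max_chain_hat by fastforce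
next
  assume ?chain
  then have c: "c \<in> max_chains_interval (hat_carrier S) (le_ext le) (Elem a) Top"
    and len: "length c = N + 2" by auto
  then have hd: "c ! 0 = Elem a" and last: "c ! (N + 1) = Top"
    and cov: "\<And>i. i \<le> N \<Longrightarrow> covers (hat_carrier S) (le_ext le) (c ! i) (c ! Suc i)"
    by (auto simp: max_chains_interval_def hd_conv_nth last_conv_nth)
  define xs where "xs = map (\<lambda>i. SOME x. c ! i = Elem x) [0..<N + 1]"
  have xs_nth: "c ! i = Elem (xs ! i)" if "i \<le> N" for i
    using someI_ex[OF max_chain_hat_inner[OF c len that]] that
    by (simp add: xs_def nth_map del: upt_Suc)
  have len_xs: "length xs = N + 1" by (simp add: xs_def del: upt_Suc)
  have "c = map Elem xs @ [Top]"
  proof (rule nth_equalityI)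
    fix i assume "i < length c"
    then consider "i \<le> N" | "i = N + 1" using len by linarith
    then show "c ! i = (map Elem xs @ [Top]) ! i"
      using last by cases (simp_all add: xs_nth nth_append len_xs)
  qed (simp add: len len_xs)
  moreover have "cover_path S le xs"
    unfolding cover_path_def
  proof (intro allI impI)
    fix i assume "Suc i < length xs"
    then show "covers S le (xs ! i) (xs ! Suc i)"
      using cov[of i] xs_nth[of i] xs_nth[of "Suc i"] len_xs by (simp add: covers_hat_Elem_Elem)
  qed
  moreover have "maximal_in S le (last xs)"
    using cov[of N] xs_nth[of N] last len_xs last_conv_nth[of xs]
    by (force simp: covers_hat_Elem_Top)
  ultimately show ?path using hd xs_nth[of 0] len_xs by auto
qed

lemma finite_max_chains_of_length:
  assumes "finite S"
  shows "finite {c \<in> max_chains_interval S le x y. length c = k}"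
proof (rule finite_subset)
  show "{c \<in> max_chains_interval S le x y. length c = k} \<subseteq> {c. set c \<subseteq> insert x S \<and> length c = k}"
  proof (rule subsetI)
    fix c assume "c \<in> {c \<in> max_chains_interval S le x y. length c = k}"
    then have c: "c \<in> max_chains_interval S le x y" and len: "length c = k" by auto
    have "c ! i \<in> insert x S" if "i < length c" for i
    proof (cases i)
      case 0
      then show ?thesis using c by (auto simp: max_chains_interval_def hd_conv_nth)
    next
      case (Suc j)
      then show ?thesis using c that by (auto simp: max_chains_interval_def covers_def)
    qed
    then have "set c \<subseteq> insert x S" by (metis in_set_conv_nth subsetI)
    then show "c \<in> {c. set c \<subseteq> insert x S \<and> length c = k}" using len by simp
  qed
  show "finite {c. set c \<subseteq> insert x S \<and> length c = k}"
    using assms by (simp add: finite_lists_length_eq)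
qed

lemma length_labels [simp]: "length (labels lam c) = length c - 1"
  by (simp add: labels_def)

lemma labels_hat_nth:
  assumes "i < length xs"
  shows "labels lam (map Elem xs @ [Top]) ! i =
    lam (Elem (xs ! i)) (if Suc i < length xs then Elem (xs ! Suc i) else Top)"
  using assms by (simp add: labels_def nth_append)

lemma maxchain_extend:
  assumes "finite S" "is_chain S le C"
  shows "\<exists>D. is_maxchain S le D \<and> C \<subseteq> D"
proof -
  let ?K = "{D. is_chain S le D \<and> C \<subseteq> D}"
  have fin: "finite ?K"
    using assms(1) by (rule finite_subset[rotated, OF finite_Pow_iff[THEN iffD2]]) (auto simp: is_chain_def)
  have "Max (card ` ?K) \<in> card ` ?K" using fin assms(2) by (intro Max_in) auto
  then obtain D where D: "D \<in> ?K" "card D = Max (card ` ?K)" by (metis (no_types, lifting) imageE)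
  have "is_maxchain S le D"
    unfolding is_maxchain_def
  proof (intro conjI allI impI)
    show "is_chain S le D" using D by auto
    fix D' assume D': "is_chain S le D' \<and> D \<subseteq> D'"
    then have "D' \<in> ?K" using D by auto
    then have "card D' \<le> card D" using D fin by (simp add: Max_ge)
    moreover have "finite D'" using D' assms(1) by (meson finite_subset is_chain_def)
    ultimately show "D' = D" using D' card_seteq by blast
  qed
  then show ?thesis using D by auto
qed

locale finite_semipure_poset =
  fixes P :: "'a::order set"
  assumes finite_P: "finite P" and semipure_P: "semipure P"
begin

lemma ex_maxchain_below: "\<exists>C. is_maxchain (below P x) (\<le>) C"
  using maxchain_extend[of "below P x" "(\<le>)" "{}"] finite_P
  by (auto simp: below_def is_chain_def)

lemma rank_eq:
  assumes "x \<in> P" "is_maxchain (below P x) (\<le>) C"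
  shows "rank P x = card C - 1"
  using someI_ex[OF ex_maxchain_below] semipure_P assms unfolding semipure_def rank_def by metis

lemma maxchain_below_props:
  assumes "x \<in> P" "is_maxchain (below P x) (\<le>) C"
  shows "x \<in> C" "C \<subseteq> below P x" "finite C"
proof -
  have ch: "is_chain (below P x) (\<le>) C" using assms(2) unfolding is_maxchain_def by simp
  then show sub: "C \<subseteq> below P x" unfolding is_chain_def by simp
  have "is_chain (below P x) (\<le>) (insert x C)"
    using assms(1) ch unfolding is_chain_def below_def by auto
  then show "x \<in> C" using assms(2) unfolding is_maxchain_def by blast
  have "finite (below P x)" using finite_P by (simp add: below_def)
  then show "finite C" using sub by (rule finite_subset[rotated])
qed

text \<open>A maximal chain below \<open>x\<close> extends to one below any \<open>y \<ge> x\<close>.\<close>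
lemma rank_mono:
  assumes "x \<in> P" "y \<in> P" "x \<le> y"
  shows "rank P x \<le> rank P y"
proof -
  obtain C where C: "is_maxchain (below P x) (\<le>) C" using ex_maxchain_below by blast
  have "is_chain (below P x) (\<le>) C" using C by (simp add: is_maxchain_def)
  then have "is_chain (below P y) (\<le>) C"
    using assms(3) unfolding is_chain_def below_def by (auto intro: order_trans)
  then obtain D where D: "is_maxchain (below P y) (\<le>) D" "C \<subseteq> D"
    using maxchain_extend[of "below P y"] finite_P by (simp add: below_def) blast
  then have "card C \<le> card D" using maxchain_below_props(3)[OF assms(2) D(1)] card_mono by blast
  then show ?thesis using rank_eq[OF assms(1) C] rank_eq[OF assms(2) D(1)] by simp
qed

text \<open>A cover raises the rank by one: a maximal chain below \<open>x\<close> extended by \<open>y\<close>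
  is a maximal chain below \<open>y\<close>.\<close>
lemma rank_cover:
  assumes "covers P (\<le>) x y"
  shows "rank P y = Suc (rank P x)"
proof -
  have xy: "x \<in> P" "y \<in> P" "x \<noteq> y" "x \<le> y"
    and between: "\<forall>u\<in>P. x \<le> u \<and> u \<le> y \<longrightarrow> u = x \<or> u = y"
    using assms unfolding covers_def by auto
  obtain C where C: "is_maxchain (below P x) (\<le>) C" using ex_maxchain_below by blast
  note C_props = maxchain_below_props[OF xy(1) C]
  have C_chain: "is_chain (below P x) (\<le>) C" using C by (simp add: is_maxchain_def)
  have y_notin: "y \<notin> C" using C_props(2) xy unfolding below_def by auto
  have "is_maxchain (below P y) (\<le>) (insert y C)"
    unfolding is_maxchain_def
  proof (intro conjI allI impI)
    show "is_chain (below P y) (\<le>) (insert y C)"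
      using C_chain xy unfolding is_chain_def below_def by (auto intro: order_trans)
    fix D assume D: "is_chain (below P y) (\<le>) D \<and> insert y C \<subseteq> D"
    have "is_chain (below P x) (\<le>) (D - {y})"
      using D C_props(1) between unfolding is_chain_def below_def by auto
    moreover have "C \<subseteq> D - {y}" using D y_notin by auto
    ultimately have "D - {y} = C" using C unfolding is_maxchain_def by blast
    then show "D = insert y C" using D by auto
  qed
  then have "rank P y = card C" using rank_eq xy(2) C_props(3) y_notin by simp
  also have "card C = Suc (rank P x)"
    using rank_eq[OF xy(1) C] C_props by (metis Suc_diff_1 card_gt_0_iff empty_iff)
  finally show ?thesis .
qed

text \<open>A maximal chain below \<open>x\<close> is a chain of \<open>P\<close>.\<close>
lemma rank_le_length:
  assumes "x \<in> P"
  shows "rank P x \<le> poset_length P"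
proof -
  obtain C where C: "is_maxchain (below P x) (\<le>) C" using ex_maxchain_below by blast
  have "is_chain (below P x) (\<le>) C" using C by (simp add: is_maxchain_def)
  then have "is_chain P (\<le>) C" unfolding is_chain_def below_def by auto
  moreover have "finite {card C - 1 | C. is_chain P (\<le>) C}"
    using finite_P by (auto intro: finite_subset[of _ "(\<lambda>C. card C - 1) ` Pow P"] simp: is_chain_def)
  ultimately have "card C - 1 \<le> poset_length P" unfolding poset_length_def by (intro Max_ge) auto
  then show ?thesis using rank_eq[OF assms C] by simp
qed

end

definition append_step :: "nat list \<Rightarrow> nat \<Rightarrow> nat list" where
  "append_step k v = (if v = 0 then k else k @ [v])"

lemma prefix_length_eq: "prefix k q \<Longrightarrow> length q \<le> length k \<Longrightarrow> q = k"
  by (auto simp: prefix_def)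

locale rees_product = finite_semipure_poset P for P :: "'a::order set" +
  fixes t :: nat
begin

abbreviation R :: "('a \<times> nat list) set" where
  "R \<equiv> rees_carrier P t (poset_length P)"

text \<open>Since ranks are bounded by the length of \<open>P\<close>, the length constraint of \<open>T\<^sub>t\<^sub>,\<^sub>n\<close> is
  implied by the rank constraint.\<close>
lemma rees_mem_iff:
  "(p, s) \<in> R \<longleftrightarrow> p \<in> P \<and> set s \<subseteq> {1..t} \<and> length s \<le> rank P p"
  using rank_le_length[of p] by (auto simp: rees_carrier_def Tseq_def)

lemma rees_le_iff:
  "rees_le P (x, k) (y, l) \<longleftrightarrow> x \<le> y \<and> prefix k l \<and>
     int (length l) - int (length k) \<le> int (rank P y) - int (rank P x)"
  by (simp add: rees_le_def)

lemma rees_cover_dest: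
  assumes "covers R (rees_le P) (x, k) (y, l)"
  shows "covers P (\<le>) x y" "\<exists>v\<le>t. l = append_step k v"
proof -
  have mem: "(x, k) \<in> R" "(y, l) \<in> R" and neq: "(x, k) \<noteq> (y, l)"
    and le: "rees_le P (x, k) (y, l)"
    and between: "\<forall>w\<in>R. rees_le P (x, k) w \<and> rees_le P w (y, l) \<longrightarrow> w = (x, k) \<or> w = (y, l)"
    using assms unfolding covers_def by auto
  have xP: "x \<in> P" and yP: "y \<in> P" and k_rank: "length k \<le> rank P x"
    and l_set: "set l \<subseteq> {1..t}"
    using mem by (auto simp: rees_mem_iff)
  obtain r where l: "l = k @ r" using le by (auto simp: rees_le_iff prefix_def)
  have xy: "x \<le> y" and r_rank: "length r + rank P x \<le> rank P y"
    using le l by (auto simp: rees_le_iff)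
  have "x \<noteq> y" using neq l r_rank by auto
  \<comment> \<open>an element strictly between \<open>x\<close> and \<open>y\<close> would give one between \<open>(x,k)\<close> and \<open>(y,l)\<close>,
     obtained by appending as much of \<open>r\<close> as its rank allows\<close>
  moreover have "u = x \<or> u = y" if uP: "u \<in> P" and u: "x \<le> u" "u \<le> y" for u
  proof -
    define q where "q = k @ take (min (length r) (rank P u - rank P x)) r"
    have ranks: "rank P x \<le> rank P u" "rank P u \<le> rank P y"
      using rank_mono xP yP uP u by blast+
    have "(u, q) \<in> R"
      using uP l_set ranks k_rank unfolding rees_mem_iff q_def l by (auto dest: in_set_takeD)
    moreover have "rees_le P (x, k) (u, q)" "rees_le P (u, q) (y, l)"
      using u ranks r_rank unfolding rees_le_iff q_def l by (auto simp: take_is_prefix)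
    ultimately have "(u, q) = (x, k) \<or> (u, q) = (y, l)" using between by blast
    then show ?thesis by auto
  qed
  ultimately show cov: "covers P (\<le>) x y" using xP yP xy unfolding covers_def by blast
  have "length r \<le> 1" using r_rank rank_cover[OF cov] by simp
  then have "r = [] \<or> (\<exists>v. r = [v] \<and> v \<noteq> 0 \<and> v \<le> t)" using l_set l by (cases r) auto
  then show "\<exists>v\<le>t. l = append_step k v" using l by (auto simp: append_step_def)
qed

lemma rees_cover_intro:
  assumes cov: "covers P (\<le>) x y" and mem: "(x, k) \<in> R" and v: "v \<le> t"
  shows "covers R (rees_le P) (x, k) (y, append_step k v)"
proof -
  define l where "l = append_step k v"
  have xP: "x \<in> P" and yP: "y \<in> P" and xy: "x \<le> y" "x \<noteq> y"
    and between: "\<forall>u\<in>P. x \<le> u \<and> u \<le> y \<longrightarrow> u = x \<or> u = y"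
    using cov unfolding covers_def by auto
  have rank_y: "rank P y = Suc (rank P x)" using rank_cover[OF cov] .
  have l_len: "length l \<le> Suc (length k)" and l_pre: "prefix k l"
    unfolding l_def append_step_def by auto
  have "(y, l) \<in> R"
    using mem yP v rank_y by (auto simp: rees_mem_iff l_def append_step_def)
  moreover have "rees_le P (x, k) (y, l)"
    using xy l_len l_pre rank_y by (simp add: rees_le_iff)
  moreover have "w = (x, k) \<or> w = (y, l)"
    if "w \<in> R" "rees_le P (x, k) w" "rees_le P w (y, l)" for w
  proof -
    obtain u q where w: "w = (u, q)" by fastforce
    have uP: "u \<in> P" using that w by (simp add: rees_mem_iff)
    have le1: "x \<le> u" "prefix k q" "int (length q) - int (length k) \<le> int (rank P u) - int (rank P x)"
      and le2: "u \<le> y" "prefix q l" "int (length l) - int (length q) \<le> int (rank P y) - int (rank P u)"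
      using that w by (auto simp: rees_le_iff)
    from between uP le1(1) le2(1) have "u = x \<or> u = y" by blast
    then show ?thesis
    proof
      assume "u = x"
      then have "q = k" using le1 prefix_length_eq by simp
      then show ?thesis using w \<open>u = x\<close> by simp
    next
      assume "u = y"
      then have "q = l" using le2 prefix_length_eq[of q l] by (simp add: prefix_order.eq_iff)
      then show ?thesis using w \<open>u = y\<close> by simp
    qed
  qed
  ultimately show ?thesis using mem xy unfolding covers_def l_def by auto
qed

lemma rees_maximal_iff:
  assumes mem: "(x, k) \<in> R"
  shows "maximal_in R (rees_le P) (x, k) \<longleftrightarrow> maximal_in P (\<le>) x"
proof
  assume max: "maximal_in R (rees_le P) (x, k)"
  have xP: "x \<in> P" using mem by (simp add: rees_mem_iff)
  have "b = x" if "b \<in> P" "x \<le> b" for b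
  proof -
    have "rank P x \<le> rank P b" using rank_mono[OF xP that] .
    then have "(b, k) \<in> R" "rees_le P (x, k) (b, k)"
      using mem that by (auto simp: rees_mem_iff rees_le_iff)
    then show ?thesis using max unfolding maximal_in_def by blast
  qed
  then show "maximal_in P (\<le>) x" using xP unfolding maximal_in_def by blast
next
  assume max: "maximal_in P (\<le>) x"
  have "w = (x, k)" if "w \<in> R" "rees_le P (x, k) w" for w
  proof -
    obtain u q where w: "w = (u, q)" by fastforce
    have "u = x" using max that w unfolding maximal_in_def by (auto simp: rees_mem_iff rees_le_iff)
    then show ?thesis using that w prefix_length_eq by (auto simp: rees_le_iff)
  qed
  then show "maximal_in R (rees_le P) (x, k)" using mem unfolding maximal_in_def by blast
qed

end

fun tword :: "(nat \<Rightarrow> nat) \<Rightarrow> nat \<Rightarrow> nat list" where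
  "tword d 0 = []"
| "tword d (Suc i) = append_step (tword d i) (d i)"

definition lift :: "'a list \<Rightarrow> (nat \<Rightarrow> nat) \<Rightarrow> ('a \<times> nat list) list" where
  "lift xs d = map (\<lambda>i. (xs ! i, tword d i)) [0..<length xs]"

lemma length_lift [simp]: "length (lift xs d) = length xs"
  by (simp add: lift_def)

lemma nth_lift: "i < length xs \<Longrightarrow> lift xs d ! i = (xs ! i, tword d i)"
  by (simp add: lift_def)

lemma tword_cong: "(\<And>j. j < i \<Longrightarrow> d j = d' j) \<Longrightarrow> tword d i = tword d' i"
  by (induction i) simp_all

lemma strict_prefix_tword_Suc: "strict_prefix (tword d i) (tword d (Suc i)) \<longleftrightarrow> d i \<noteq> 0"
  by (simp add: append_step_def strict_prefix_def)

lemma tword_Suc_inj: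
  "tword d i = tword d' i \<Longrightarrow> tword d (Suc i) = tword d' (Suc i) \<Longrightarrow> d i = d' i"
  by (auto simp: append_step_def split: if_splits)

definition hat_lift :: "'a ext list \<Rightarrow> (nat \<Rightarrow> nat) \<Rightarrow> ('a \<times> nat list) ext list" where
  "hat_lift c d = map (\<lambda>i. map_ext (\<lambda>x. (x, tword d i)) (c ! i)) [0..<length c]"

lemma hat_lift_Elem: "hat_lift (map Elem xs @ [Top]) d = map Elem (lift xs d) @ [Top]"
  by (rule nth_equalityI) (auto simp: hat_lift_def nth_append nth_lift less_Suc_eq)

lemma map_fst_hat_lift: "map (map_ext fst) (hat_lift c d) = c"
  by (rule nth_equalityI) (simp_all add: hat_lift_def ext.map_comp o_def ext.map_ident)

context rees_product
begin

lemma lift_cover_path: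
  assumes path: "cover_path P (\<le>) xs" and x0: "xs ! 0 \<in> P"
    and d: "\<And>j. Suc j < length xs \<Longrightarrow> d j \<le> t"
  shows "cover_path R (rees_le P) (lift xs d)" "\<And>i. i < length xs \<Longrightarrow> (xs ! i, tword d i) \<in> R"
proof -
  have cov: "covers R (rees_le P) (xs ! i, tword d i) (xs ! Suc i, tword d (Suc i))"
    if "Suc i < length xs" "(xs ! i, tword d i) \<in> R" for i
    using rees_cover_intro[OF _ that(2) d[OF that(1)]] path that(1)
    by (simp add: cover_path_def)
  show mem: "(xs ! i, tword d i) \<in> R" if "i < length xs" for i
    using that
  proof (induction i)
    case 0
    then show ?case using x0 by (simp add: rees_mem_iff)
  next
    case (Suc i)
    then show ?case using cov[of i] by (simp add: covers_def)
  qed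
  show "cover_path R (rees_le P) (lift xs d)"
    using cov mem by (simp add: cover_path_def nth_lift)
qed

lemma cover_path_unlift:
  assumes path: "cover_path R (rees_le P) ys" and y0: "snd (ys ! 0) = []"
  obtains d where "\<And>j. d j \<le> t" "ys = lift (map fst ys) d" "cover_path P (\<le>) (map fst ys)"
proof -
  have step: "covers P (\<le>) (fst (ys ! i)) (fst (ys ! Suc i)) \<and>
      (\<exists>v\<le>t. snd (ys ! Suc i) = append_step (snd (ys ! i)) v)" if "Suc i < length ys" for i
  proof -
    have "covers R (rees_le P) (fst (ys ! i), snd (ys ! i)) (fst (ys ! Suc i), snd (ys ! Suc i))"
      using path that by (simp add: cover_path_def)
    from rees_cover_dest[OF this] show ?thesis by blast
  qed
  define d where
    "d j = (if Suc j < length ys then SOME v. v \<le> t \<and> snd (ys ! Suc j) = append_step (snd (ys ! j)) v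
            else 0)" for j
  have d_step: "d j \<le> t \<and> snd (ys ! Suc j) = append_step (snd (ys ! j)) (d j)"
    if "Suc j < length ys" for j
    using someI_ex[OF step[OF that, THEN conjunct2, unfolded Bex_def]] that by (simp add: d_def)
  have d_le: "d j \<le> t" for j using d_step[of j] by (simp add: d_def)
  have "snd (ys ! i) = tword d i" if "i < length ys" for i
    using that by (induction i) (simp_all add: y0 d_step)
  then have "ys = lift (map fst ys) d" by (intro nth_equalityI) (simp_all add: nth_lift prod_eq_iff)
  moreover have "cover_path P (\<le>) (map fst ys)" using step by (simp add: cover_path_def)
  ultimately show ?thesis using that d_le by blast
qed

end

lemma labels_lift_nth:
  assumes "i < length xs"
  shows "labels (induced_lab lamP) (map Elem (lift xs d) @ [Top]) ! i =
    (labels lamP (map Elem xs @ [Top]) ! i, Suc i < length xs \<and> d i \<noteq> 0)"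
  using assms
  by (simp add: labels_hat_nth nth_lift strict_prefix_tword_Suc del: tword.simps)

text \<open>The steps allowed at position \<open>j\<close> of an ascent free lift of a chain with label word
  \<open>w\<close>: an ascent \<open>w ! j \<le> w ! Suc j\<close> forces a proper step at \<open>j\<close>, and an ascent at
  \<open>j - 1\<close> forbids one.\<close>
definition admissible :: "nat \<Rightarrow> 'l::order list \<Rightarrow> nat \<Rightarrow> nat set" where
  "admissible t w j = {v. v \<le> t \<and> (w ! j \<le> w ! Suc j \<longrightarrow> v \<noteq> 0) \<and>
                          (0 < j \<and> w ! (j - 1) \<le> w ! j \<longrightarrow> v = 0)}"

lemma ascent_free_flagged_iff:
  assumes "length L = Suc m" "\<And>i. i \<le> m \<Longrightarrow> L ! i = (w ! i, i < m \<and> f i)"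
  shows "ascent_free le_lab L \<longleftrightarrow>
    (\<forall>i<m. w ! i \<le> w ! Suc i \<longrightarrow> f i \<and> \<not> (Suc i < m \<and> f (Suc i)))"
proof -
  have "le_lab (L ! i) (L ! Suc i) \<longleftrightarrow> w ! i \<le> w ! Suc i \<and> (f i \<longrightarrow> Suc i < m \<and> f (Suc i))"
    if "i < m" for i
    using assms(2) that by (simp add: le_lab_def le_bool_def)
  then show ?thesis unfolding ascent_free_def using assms(1) by auto
qed

lemma ascent_condition_iff_admissible:
  assumes "\<And>j. j < m \<Longrightarrow> d j \<le> t"
  shows "(\<forall>i<m. w ! i \<le> w ! Suc i \<longrightarrow> d i \<noteq> 0 \<and> \<not> (Suc i < m \<and> d (Suc i) \<noteq> 0))
     \<longleftrightarrow> (\<forall>j<m. d j \<in> admissible t w j)"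
proof
  assume asc: "\<forall>i<m. w ! i \<le> w ! Suc i \<longrightarrow> d i \<noteq> 0 \<and> \<not> (Suc i < m \<and> d (Suc i) \<noteq> 0)"
  show "\<forall>j<m. d j \<in> admissible t w j"
  proof (intro allI impI)
    fix j assume j: "j < m"
    have "0 < j \<and> w ! (j - 1) \<le> w ! j \<longrightarrow> d j = 0"
      using asc[rule_format, of "j - 1"] j by (cases j) auto
    then show "d j \<in> admissible t w j" using asc assms j by (simp add: admissible_def)
  qed
next
  assume "\<forall>j<m. d j \<in> admissible t w j"
  then show "\<forall>i<m. w ! i \<le> w ! Suc i \<longrightarrow> d i \<noteq> 0 \<and> \<not> (Suc i < m \<and> d (Suc i) \<noteq> 0)"
    by (auto simp: admissible_def)
qed

lemma ascent_free_lift_iff: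
  assumes "length xs = Suc m" "\<And>j. j < m \<Longrightarrow> d j \<le> t"
  shows "ascent_free le_lab (labels (induced_lab lamP) (map Elem (lift xs d) @ [Top])) \<longleftrightarrow>
    (\<forall>j<m. d j \<in> admissible t (labels lamP (map Elem xs @ [Top])) j)"
  using ascent_free_flagged_iff[of _ m "labels lamP (map Elem xs @ [Top])" "\<lambda>i. d i \<noteq> 0"]
    ascent_condition_iff_admissible[OF assms(2)] assms(1)
  by (simp add: labels_lift_nth)

lemma card_admissible:
  "card (admissible t w j) =
    (if w ! j \<le> w ! Suc j then if 0 < j \<and> w ! (j - 1) \<le> w ! j then 0 else t
     else if 0 < j \<and> w ! (j - 1) \<le> w ! j then 1 else Suc t)"
proof -
  have "{v. v \<le> t \<and> v \<noteq> 0} = {1..t}" "{v::nat. v \<le> t \<and> v = 0} = {0}" by auto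
  then show ?thesis unfolding admissible_def by (auto simp: le_imp_less_Suc)
qed

lemma NDA_iff_no_consecutive_ascents:
  assumes "length w = Suc m"
  shows "w \<in> NDA (Suc m) \<longleftrightarrow>
    (\<forall>i. Suc i < m \<longrightarrow> \<not> (w ! i \<le> w ! Suc i \<and> w ! Suc i \<le> w ! Suc (Suc i)))"
  using assms by (auto simp: NDA_def numeral_2_eq_2)

lemma asc_eq_card: "length w = Suc m \<Longrightarrow> asc w = card {j. j < m \<and> w ! j \<le> w ! Suc j}"
  by (simp add: asc_def)

text \<open>A double ascent leaves no admissible step at its middle position.\<close>
lemma prod_admissible_not_NDA:
  assumes "length w = Suc m" "w \<notin> NDA (Suc m)"
  shows "(\<Prod>j<m. card (admissible t w j)) = 0"
proof -
  obtain i where "Suc i < m" "w ! i \<le> w ! Suc i" "w ! Suc i \<le> w ! Suc (Suc i)"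
    using assms NDA_iff_no_consecutive_ascents by blast
  then have "Suc i \<in> {..<m}" "card (admissible t w (Suc i)) = 0" by (simp_all add: card_admissible)
  then show ?thesis by (meson finite_lessThan prod_zero_iff)
qed

lemma prod_power_indicator:
  "finite I \<Longrightarrow> (\<Prod>j\<in>I. (b::nat) ^ (if j \<in> S then 1 else 0)) = b ^ card (I \<inter> S)"
  by (simp add: power_sum[symmetric] sum.If_cases)

lemma card_ascents_split:
  fixes a :: "nat \<Rightarrow> bool"
  shows "card {i. Suc i < m \<and> a i} + (if 0 < m \<and> a (m - 1) then 1 else 0) = card {j. j < m \<and> a j}"
proof -
  have "{j. j < m \<and> a j} = {i. Suc i < m \<and> a i} \<union> (if 0 < m \<and> a (m - 1) then {m - 1} else {})"
    by (auto, metis Suc_lessI diff_Suc_Suc minus_nat.diff_0)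
  moreover have "finite {i. Suc i < m \<and> a i}" by (rule finite_subset[of _ "{..<m}"]) auto
  ultimately show ?thesis by auto
qed

text \<open>On a word without double ascents the positions \<open>j < m\<close> split into ascents \<open>A\<close>
  (\<open>t\<close> choices each), successors \<open>B\<close> of ascents (one choice) and free positions \<open>F\<close>
  (\<open>t + 1\<close> choices); there are as many successors as ascents, except that an ascent at
  \<open>m - 1\<close> has no successor below \<open>m\<close>.\<close>
lemma prod_admissible_NDA:
  assumes len: "length w = Suc m" and nda: "w \<in> NDA (Suc m)"
  shows "(\<Prod>j<m. card (admissible t w j)) =
    t ^ asc w * (1 + t) ^ (m + (if 0 < m \<and> w ! (m - 1) \<le> w ! m then 1 else 0) - 2 * asc w)"
proof -
  define a where "a j \<longleftrightarrow> w ! j \<le> w ! Suc j" for j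
  define L where "L \<longleftrightarrow> 0 < m \<and> a (m - 1)"
  define A where "A = {j. j < m \<and> a j}"
  define A' where "A' = {i. Suc i < m \<and> a i}"
  define B where "B = Suc ` A'"
  define F where "F = {..<m} - (A \<union> B)"
  have no_double: "\<not> (a i \<and> a (Suc i))" if "Suc i < m" for i
    using nda NDA_iff_no_consecutive_ascents[OF len] that unfolding a_def by blast
  have disjoint: "A \<inter> B = {}" using no_double unfolding A_def A'_def B_def by blast
  have B_iff: "j \<in> B \<longleftrightarrow> 0 < j \<and> w ! (j - 1) \<le> w ! j" if "j < m" for j
    using that unfolding B_def A'_def a_def by (cases j) auto
  have card_j: "card (admissible t w j) = t ^ (if j \<in> A then 1 else 0) * (1 + t) ^ (if j \<in> F then 1 else 0)"
    if j: "j < m" for j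
  proof -
    have "j \<in> A \<longleftrightarrow> w ! j \<le> w ! Suc j" "j \<in> F \<longleftrightarrow> j \<notin> A \<and> j \<notin> B"
      using j unfolding A_def F_def a_def by auto
    then show ?thesis using disjoint B_iff[OF j] unfolding card_admissible by auto
  qed
  have "(\<Prod>j<m. card (admissible t w j)) =
      (\<Prod>j<m. t ^ (if j \<in> A then 1 else 0) * (1 + t) ^ (if j \<in> F then 1 else 0))"
    using card_j by (rule prod.cong[OF refl]) simp
  also have "\<dots> = t ^ card A * (1 + t) ^ card F"
  proof -
    have "{..<m} \<inter> A = A" "{..<m} \<inter> F = F" by (auto simp: A_def F_def)
    then show ?thesis by (simp only: prod.distrib prod_power_indicator finite_lessThan)
  qed
  finally have prod_eq: "(\<Prod>j<m. card (admissible t w j)) = t ^ card A * (1 + t) ^ card F" .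
  have sub: "A \<union> B \<subseteq> {..<m}" by (auto simp: A_def A'_def B_def)
  then have fin: "finite A" "finite B" by (auto intro: finite_subset)
  have "card (A \<union> B) = card A + card B" using card_Un_disjoint[OF fin disjoint] .
  then have "card F = m - (card A + card B)" "card A + card B \<le> m"
    using card_Diff_subset[OF _ sub] card_mono[OF _ sub] fin by (simp_all add: F_def)
  moreover have "card B + (if L then 1 else 0) = card A"
    using card_ascents_split[of m a] unfolding A_def A'_def B_def L_def by (simp add: card_image)
  moreover have "asc w = card A" unfolding A_def a_def using asc_eq_card[OF len] .
  ultimately have "card F = m + (if L then 1 else 0) - 2 * asc w" by linarith
  moreover have "L \<longleftrightarrow> 0 < m \<and> w ! (m - 1) \<le> w ! m" unfolding L_def a_def by (cases m) auto
  ultimately show ?thesis unfolding prod_eq \<open>asc w = card A\<close> by simp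
qed

lemma prod_admissible:
  assumes "length w = Suc m"
  shows "(\<Prod>j<m. card (admissible t w j)) =
     (if w \<in> NDA (m + 1) \<and> \<not> (0 < m \<and> w ! (m - 1) \<le> w ! m)
            then t ^ asc w * (1 + t) ^ (m - 2 * asc w) else 0)
   + (if w \<in> NDA (m + 1) \<and> (0 < m \<and> w ! (m - 1) \<le> w ! m)
            then t ^ asc w * (1 + t) ^ (m + 1 - 2 * asc w) else 0)"
  using prod_admissible_NDA[OF assms] prod_admissible_not_NDA[OF assms] by auto

lemma sum_over_fibres:
  fixes f :: "'b \<Rightarrow> nat"
  assumes "finite A"
  shows "(\<Sum>a\<in>A. f (g a)) = Sum_any (\<lambda>b. card {a \<in> A. g a = b} * f b)"
proof -
  have "(\<Sum>a\<in>A. f (g a)) = (\<Sum>b\<in>g ` A. \<Sum>a\<in>{a \<in> A. g a = b}. f (g a))"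
    using assms by (intro sum.group[symmetric]) simp_all
  also have "\<dots> = (\<Sum>b\<in>g ` A. card {a \<in> A. g a = b} * f b)" by simp
  also have "\<dots> = Sum_any (\<lambda>b. card {a \<in> A. g a = b} * f b)"
    using assms by (intro Sum_any.expand_superset[symmetric]) auto
  finally show ?thesis .
qed

locale ascent_free_count = rees_product P t for P :: "'a::order set" and t +
  fixes z :: 'a and m :: nat and lamP :: "'a ext \<Rightarrow> 'a ext \<Rightarrow> 'l::order"
begin

definition P_chains :: "'a ext list set" where
  "P_chains = {c \<in> max_chains_interval (hat_carrier P) (le_ext (\<le>)) (Elem z) Top. length c = m + 2}"

definition AF_chains :: "('a \<times> nat list) ext list set" where
  "AF_chains = {c \<in> max_chains_interval (hat_carrier R) (le_ext (rees_le P)) (Elem (z, [])) Top.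
                 length c = m + 2 \<and> ascent_free le_lab (labels (induced_lab lamP) c)}"

abbreviation choices :: "'a ext list \<Rightarrow> (nat \<Rightarrow> nat) set" where
  "choices c \<equiv> PiE {..<m} (admissible t (labels lamP c))"

lemma P_chains_iff:
  "c \<in> P_chains \<longleftrightarrow> (\<exists>xs. c = map Elem xs @ [Top] \<and> length xs = Suc m \<and> xs ! 0 = z \<and>
     cover_path P (\<le>) xs \<and> maximal_in P (\<le>) (last xs))"
  using max_chains_hat_iff[of c P "(\<le>)" z m] by (simp add: P_chains_def)

lemma AF_chains_iff:
  "c \<in> AF_chains \<longleftrightarrow> (\<exists>ys. c = map Elem ys @ [Top] \<and> length ys = Suc m \<and> ys ! 0 = (z, []) \<and>
     cover_path R (rees_le P) ys \<and> maximal_in R (rees_le P) (last ys)) \<and>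
     ascent_free le_lab (labels (induced_lab lamP) c)"
  using max_chains_hat_iff[of c R "rees_le P" "(z, [])" m] by (auto simp: AF_chains_def)

lemma choices_le:
  assumes "d \<in> choices c" "j < m"
  shows "d j \<le> t"
proof -
  have "d j \<in> admissible t (labels lamP c) j" using PiE_mem[OF assms(1)] assms(2) by simp
  then show ?thesis by (simp add: admissible_def)
qed

lemma hat_lift_mem:
  assumes c: "c \<in> P_chains" and d: "d \<in> choices c"
  shows "hat_lift c d \<in> AF_chains"
proof -
  obtain xs where c_eq: "c = map Elem xs @ [Top]" and len: "length xs = Suc m"
    and x0: "xs ! 0 = z" and path: "cover_path P (\<le>) xs" and max: "maximal_in P (\<le>) (last xs)"
    using c P_chains_iff by blast
  have d_le: "\<And>j. j < m \<Longrightarrow> d j \<le> t" using choices_le[OF d] .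
  have "xs \<noteq> []" using len by auto
  then have "xs ! 0 \<in> P" using cover_path_subset[OF path _ max] nth_mem[of 0 xs] by auto
  note lifted = lift_cover_path[OF path this, of d]
  have path_R: "cover_path R (rees_le P) (lift xs d)" using lifted(1) d_le len by simp
  have last_xs: "last xs = xs ! m" using len \<open>xs \<noteq> []\<close> by (simp add: last_conv_nth)
  have last_lift: "last (lift xs d) = (xs ! m, tword d m)"
  proof -
    have "lift xs d \<noteq> []" using len by (simp flip: length_greater_0_conv)
    then show ?thesis using len by (simp add: last_conv_nth nth_lift)
  qed
  have "maximal_in R (rees_le P) (last (lift xs d))"
    using lifted(2)[of m] rees_maximal_iff max len d_le by (simp add: last_lift last_xs)
  moreover have "lift xs d ! 0 = (z, [])" using len x0 by (simp add: nth_lift)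
  moreover have "ascent_free le_lab (labels (induced_lab lamP) (map Elem (lift xs d) @ [Top]))"
    using ascent_free_lift_iff[of xs m d t lamP, OF len d_le] PiE_mem[OF d] c_eq by simp
  ultimately show ?thesis
    using path_R len unfolding c_eq hat_lift_Elem AF_chains_iff by auto
qed

text \<open>Injectivity: projecting recovers the chain, and consecutive \<open>T\<close>-coordinates recover
  the steps.\<close>
lemma hat_lift_inj: "inj_on (\<lambda>(c, d). hat_lift c d) (Sigma P_chains choices)"
proof (rule inj_onI, clarify)
  fix c d c' d'
  assume c: "c \<in> P_chains" and d: "d \<in> choices c" and "c' \<in> P_chains" and d': "d' \<in> choices c'"
    and eq: "hat_lift c d = hat_lift c' d'"
  have "c = c'" using arg_cong[OF eq, of "map (map_ext fst)"] by (simp add: map_fst_hat_lift)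
  obtain xs where c_eq: "c = map Elem xs @ [Top]" and len: "length xs = Suc m"
    using c P_chains_iff by blast
  have "hat_lift c d = hat_lift c d'" using eq \<open>c = c'\<close> by simp
  then have "lift xs d = lift xs d'" unfolding c_eq hat_lift_Elem by (simp add: inj_map_eq_map inj_def)
  have tw: "tword d i = tword d' i" if "i \<le> m" for i
  proof -
    have "lift xs d ! i = lift xs d' ! i" using \<open>lift xs d = lift xs d'\<close> by simp
    then show ?thesis using that len by (simp add: nth_lift)
  qed
  have d_eq: "d j = d' j" if "j \<in> {..<m}" for j
    using that by (intro tword_Suc_inj[of d j d'] tw) auto
  have "d' \<in> choices c" using d' \<open>c = c'\<close> by simp
  with d have "d = d'" using d_eq by (rule PiE_ext)
  then show "c = c' \<and> d = d'" using \<open>c = c'\<close> by simp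
qed

text \<open>Surjectivity: an ascent free chain of the Rees product is the lift of its projection,
  with the step choices restricted to the first \<open>m\<close> positions.\<close>
lemma AF_chains_subset: "AF_chains \<subseteq> (\<lambda>(c, d). hat_lift c d) ` Sigma P_chains choices"
proof
  fix c' assume "c' \<in> AF_chains"
  then obtain ys where c'_eq: "c' = map Elem ys @ [Top]" and len: "length ys = Suc m"
    and y0: "ys ! 0 = (z, [])" and path: "cover_path R (rees_le P) ys"
    and max: "maximal_in R (rees_le P) (last ys)"
    and af: "ascent_free le_lab (labels (induced_lab lamP) c')"
    unfolding AF_chains_iff by blast
  obtain d where d_le: "\<And>j. d j \<le> t" and ys_eq: "ys = lift (map fst ys) d"
    and path_P: "cover_path P (\<le>) (map fst ys)"
    using cover_path_unlift[OF path] y0 by auto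
  define xs where "xs = map fst ys"
  define c where "c = map Elem xs @ [Top]"
  define d' where "d' = restrict d {..<m}"
  have "ys \<noteq> []" using len by auto
  have "last ys \<in> R" using max by (simp add: maximal_in_def)
  then have "maximal_in P (\<le>) (last xs)"
    using max rees_maximal_iff[of "fst (last ys)" "snd (last ys)"] \<open>ys \<noteq> []\<close>
    by (simp add: xs_def last_map)
  then have c: "c \<in> P_chains"
    unfolding P_chains_iff c_def using len y0 path_P by (intro exI[of _ xs]) (simp add: xs_def)
  have "lift xs d' = lift xs d"
    unfolding lift_def using len by (auto simp: xs_def d'_def intro!: tword_cong)
  moreover have hat_c: "hat_lift c d' = map Elem (lift xs d') @ [Top]"
    unfolding c_def by (rule hat_lift_Elem)
  ultimately have lift_eq: "hat_lift c d' = c'" using ys_eq c'_eq by (simp add: xs_def)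
  have "\<forall>j<m. d' j \<in> admissible t (labels lamP c) j"
    using ascent_free_lift_iff[of xs m d' t lamP] af lift_eq hat_c len d_le
    by (simp add: xs_def d'_def c_def)
  then have "d' \<in> choices c" by (simp add: PiE_iff d'_def)
  then show "c' \<in> (\<lambda>(c, d). hat_lift c d) ` Sigma P_chains choices"
    using c lift_eq by force
qed

lemma finite_P_chains: "finite P_chains"
  unfolding P_chains_def using finite_P
  by (intro finite_max_chains_of_length) (simp add: hat_carrier_def)

lemma card_AF_chains:
  "card AF_chains = (\<Sum>c\<in>P_chains. \<Prod>j<m. card (admissible t (labels lamP c) j))"
proof -
  have "bij_betw (\<lambda>(c, d). hat_lift c d) (Sigma P_chains choices) AF_chains"
    using hat_lift_inj AF_chains_subset hat_lift_mem unfolding bij_betw_def by auto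
  then have "card AF_chains = card (Sigma P_chains choices)" by (simp add: bij_betw_same_card)
  then show ?thesis using finite_P_chains by (simp add: card_PiE finite_PiE admissible_def)
qed

lemma chain_count_eq: "chain_count P z lamP (m + 1) w = card {c \<in> P_chains. labels lamP c = w}"
  unfolding chain_count_def P_chains_def by (rule arg_cong[where f = card]) auto

lemma card_AF_chains_closed_form:
  "card AF_chains =
      (\<Sum>w. if w \<in> NDA (m + 1) \<and> \<not> (0 < m \<and> w ! (m - 1) \<le> w ! m)
            then chain_count P z lamP (m + 1) w * t ^ asc w * (1 + t) ^ (m - 2 * asc w) else 0)
    + (\<Sum>w. if w \<in> NDA (m + 1) \<and> (0 < m \<and> w ! (m - 1) \<le> w ! m)
            then chain_count P z lamP (m + 1) w * t ^ asc w * (1 + t) ^ (m + 1 - 2 * asc w) else 0)"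
  (is "_ = ?rhs")
proof -
  define F1 where "F1 w = (if w \<in> NDA (m + 1) \<and> \<not> (0 < m \<and> w ! (m - 1) \<le> w ! m)
            then t ^ asc w * (1 + t) ^ (m - 2 * asc w) else 0)" for w :: "'l list"
  define F2 where "F2 w = (if w \<in> NDA (m + 1) \<and> (0 < m \<and> w ! (m - 1) \<le> w ! m)
            then t ^ asc w * (1 + t) ^ (m + 1 - 2 * asc w) else 0)" for w :: "'l list"
  have "card AF_chains = (\<Sum>c\<in>P_chains. \<Prod>j<m. card (admissible t (labels lamP c) j))"
    by (rule card_AF_chains)
  also have "\<dots> = (\<Sum>c\<in>P_chains. F1 (labels lamP c) + F2 (labels lamP c))"
    by (rule sum.cong[OF refl]) (simp add: prod_admissible P_chains_def F1_def F2_def)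
  also have "\<dots> = Sum_any (\<lambda>w. card {c \<in> P_chains. labels lamP c = w} * F1 w)
                 + Sum_any (\<lambda>w. card {c \<in> P_chains. labels lamP c = w} * F2 w)"
    by (simp add: sum.distrib sum_over_fibres[OF finite_P_chains])
  also have "\<dots> = ?rhs"
    unfolding chain_count_eq F1_def F2_def by (simp only: mult_zero_right if_distrib mult.assoc)
  finally show ?thesis .
qed

end

theorem theorem3p6:
  fixes P :: "'a::order set" and z :: 'a and n t m :: nat
    and lamP :: "'a ext \<Rightarrow> 'a ext \<Rightarrow> 'l::order"
  assumes "finite P" and "semipure P"
    and "z \<in> P" and "\<forall>x\<in>P. z \<le> x"
    and "n = poset_length P"
    and "t \<ge> 1"
    and "EL_labeling (hat_carrier P) (le_ext (\<le>)) lamP"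
  shows "card {c \<in> max_chains_interval (hat_carrier (rees_carrier P t n)) (le_ext (rees_le P))
                     (Elem (z, [])) Top.
                length c = m + 2 \<and> ascent_free le_lab (labels (induced_lab lamP) c)}
    = (\<Sum>w. if w \<in> NDA (m + 1) \<and> \<not> (0 < m \<and> w ! (m - 1) \<le> w ! m)
            then chain_count P z lamP (m + 1) w * t ^ asc w * (1 + t) ^ (m - 2 * asc w) else 0)
    + (\<Sum>w. if w \<in> NDA (m + 1) \<and> (0 < m \<and> w ! (m - 1) \<le> w ! m)
            then chain_count P z lamP (m + 1) w * t ^ asc w * (1 + t) ^ (m + 1 - 2 * asc w) else 0)"
proof -
  interpret ascent_free_count P t z m lamP
    using assms(1,2) by unfold_locales
  show ?thesis using card_AF_chains_closed_form unfolding AF_chains_def assms(5) .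
qed

end
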